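(* Let $(G,\sigma)$, $(G',\sigma')$, $(H,\pi)$, $(H',\pi')$ be signed graphs such that $(G,\sigma)$ admits a homomorphism to $(G',\sigma')$ and $(H,\pi)$ admits a homomorphism to $(H',\pi')$. Then $(G,\sigma)\,\square\,(H,\pi)$ admits a homomorphism to $(G',\sigma')\,\square\,(H',\pi')$.
   Context: A signed graph $(G,\sigma)$ is a simple loopless undirected graph $G$ with a signature $\sigma:E(G)\to\{+1,-1\}$. Switching a vertex $v$ negates the sign of every edge incident to $v$; two signatures of $G$ are equivalent if one is obtained from the other by switching a set of vertices. A homomorphism of $(G,\sigma)$ to $(H,\pi)$ is a graph homomorphism $\varphi:G\to H$ for which there is a signature $\sigma'$ equivalent to $\sigma$ with $\pi(\varphi(u)\varphi(v))=\sigma'(uv)$ for every edge $uv$ of $G$. The Cartesian product $(G,\sigma)\,\square\,(H,\pi)$ is the signed graph with vertex set $V(G)\times V(H)$ in which $(u_1,v_1)(u_2,v_2)$ is an edge of sign $s$ if and only if either $u_1=u_2$ and $v_1v_2$ is an edge of $H$ with $\pi(v_1v_2)=s$, or $v_1=v_2$ and $u_1u_2$ is an edge of $G$ with $\sigma(u_1u_2)=s$. *)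

theory Defs
  imports Main
begin

type_synonym 'a sgraph = "'a set \<times> 'a set set \<times> ('a set \<Rightarrow> int)"

definition sverts :: "'a sgraph \<Rightarrow> 'a set" where "sverts G = fst G"
definition sedges :: "'a sgraph \<Rightarrow> 'a set set" where "sedges G = fst (snd G)"
definition ssig :: "'a sgraph \<Rightarrow> 'a set \<Rightarrow> int" where "ssig G = snd (snd G)"

definition signed_graph :: "'a sgraph \<Rightarrow> bool" where
  "signed_graph G \<longleftrightarrow>
     (\<forall>e\<in>sedges G. \<exists>u v. u \<in> sverts G \<and> v \<in> sverts G \<and> u \<noteq> v \<and> e = {u, v}) \<and>
     (\<forall>e\<in>sedges G. ssig G e \<in> {1, -1})"

text \<open>Switching a set X of vertices: an edge changes sign once for each endpoint in X,
  i.e. its sign is negated iff exactly one endpoint lies in X.\<close>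
definition switch :: "'a set \<Rightarrow> ('a set \<Rightarrow> int) \<Rightarrow> 'a set \<Rightarrow> int" where
  "switch X sigma e = (if card (e \<inter> X) = 1 then - sigma e else sigma e)"

definition sig_equiv :: "'a set \<Rightarrow> 'a set set \<Rightarrow> ('a set \<Rightarrow> int) \<Rightarrow> ('a set \<Rightarrow> int) \<Rightarrow> bool" where
  "sig_equiv V E sigma sigma' \<longleftrightarrow>
     (\<exists>X \<subseteq> V. \<forall>e\<in>E. sigma' e = switch X sigma e)"

definition is_sg_hom :: "('a \<Rightarrow> 'b) \<Rightarrow> 'a sgraph \<Rightarrow> 'b sgraph \<Rightarrow> bool" where
  "is_sg_hom f G H \<longleftrightarrow>
     f ` sverts G \<subseteq> sverts H \<and>
     (\<forall>u v. {u, v} \<in> sedges G \<longrightarrow> {f u, f v} \<in> sedges H) \<and>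
     (\<exists>sigma'. sig_equiv (sverts G) (sedges G) (ssig G) sigma' \<and>
        (\<forall>u v. {u, v} \<in> sedges G \<longrightarrow> ssig H {f u, f v} = sigma' {u, v}))"

definition sg_hom_exists :: "'a sgraph \<Rightarrow> 'b sgraph \<Rightarrow> bool" where
  "sg_hom_exists G H \<longleftrightarrow> (\<exists>f. is_sg_hom f G H)"

text \<open>Cartesian product. An edge {(u,v1),(u,v2)} (first coordinate constant) takes the
  sign of {v1,v2} in H; an edge {(u1,v),(u2,v)} takes the sign of {u1,u2} in G.\<close>
definition sg_prod :: "'a sgraph \<Rightarrow> 'b sgraph \<Rightarrow> ('a \<times> 'b) sgraph" where
  "sg_prod G H =
    (sverts G \<times> sverts H,
     {e. \<exists>u v1 v2. u \<in> sverts G \<and> {v1, v2} \<in> sedges H \<and> e = {(u, v1), (u, v2)}} \<union>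
     {e. \<exists>v u1 u2. v \<in> sverts H \<and> {u1, u2} \<in> sedges G \<and> e = {(u1, v), (u2, v)}},
     (\<lambda>e. if card (fst ` e) = 1 then ssig H (snd ` e) else ssig G (fst ` e)))"

end

theory Submission
  imports Defs
begin

text \<open>If f maps G to G' once X is switched in G, and g maps H to H' once Y is switched
  in H, then map_prod f g maps the product to the product once the vertices (u, v) with exactly
  one of u \<in> X, v \<in> Y are switched: along an edge {(u, v1), (u, v2)} the first coordinate
  is constant, so the edge is switched exactly when {v1, v2} is switched by Y, and symmetrically
  for the edges {(u1, v), (u2, v)}.\<close>

lemma switch_doubleton:
  assumes "x \<noteq> y"
  shows "switch X \<sigma> {x, y} = (if (x \<in> X) = (y \<in> X) then \<sigma> {x, y} else - \<sigma> {x, y})"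
  using assms by (cases "x \<in> X"; cases "y \<in> X") (auto simp: switch_def)

lemma signed_graph_edgeE:
  assumes "signed_graph G" "e \<in> sedges G"
  obtains u v where "e = {u, v}" "u \<noteq> v" "u \<in> sverts G" "v \<in> sverts G"
  using assms unfolding signed_graph_def by blast

lemma signed_graph_edgeD:
  assumes "signed_graph G" "{u, v} \<in> sedges G"
  shows "u \<noteq> v" "u \<in> sverts G" "v \<in> sverts G"
proof -
  obtain x y where "{u, v} = {x, y}" "x \<noteq> y" "x \<in> sverts G" "y \<in> sverts G"
    using assms by (rule signed_graph_edgeE)
  then show "u \<noteq> v" "u \<in> sverts G" "v \<in> sverts G"
    by (auto simp: doubleton_eq_iff)
qed

definition sg_hom_after_switch :: "('a \<Rightarrow> 'b) \<Rightarrow> 'a set \<Rightarrow> 'a sgraph \<Rightarrow> 'b sgraph \<Rightarrow> bool" where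
  "sg_hom_after_switch f X G H \<longleftrightarrow>
     f ` sverts G \<subseteq> sverts H \<and>
     (\<forall>e \<in> sedges G. f ` e \<in> sedges H \<and> ssig H (f ` e) = switch X (ssig G) e)"

lemma sg_hom_after_switch_iff_doubletons:
  assumes "signed_graph G"
  shows "sg_hom_after_switch f X G H \<longleftrightarrow>
     f ` sverts G \<subseteq> sverts H \<and>
     (\<forall>u v. {u, v} \<in> sedges G \<longrightarrow> {f u, f v} \<in> sedges H) \<and>
     (\<forall>u v. {u, v} \<in> sedges G \<longrightarrow> ssig H {f u, f v} = switch X (ssig G) {u, v})"
proof -
  have "(\<forall>e \<in> sedges G. P e) \<longleftrightarrow> (\<forall>u v. {u, v} \<in> sedges G \<longrightarrow> P {u, v})" for P
    by (metis signed_graph_edgeE[OF assms])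
  then show ?thesis
    unfolding sg_hom_after_switch_def by (simp add: all_conj_distrib imp_conjR)
qed

lemma is_sg_hom_iff_switch:
  assumes "signed_graph G"
  shows "is_sg_hom f G H \<longleftrightarrow> (\<exists>X \<subseteq> sverts G. sg_hom_after_switch f X G H)"
proof -
  have "(\<exists>\<sigma>'. sig_equiv (sverts G) (sedges G) (ssig G) \<sigma>' \<and>
           (\<forall>u v. {u, v} \<in> sedges G \<longrightarrow> ssig H {f u, f v} = \<sigma>' {u, v})) \<longleftrightarrow>
        (\<exists>X \<subseteq> sverts G. \<forall>u v. {u, v} \<in> sedges G \<longrightarrow>
           ssig H {f u, f v} = switch X (ssig G) {u, v})"
    unfolding sig_equiv_def by metis
  then show ?thesis
    unfolding is_sg_hom_def sg_hom_after_switch_iff_doubletons[OF assms] by blast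
qed

lemma sverts_sg_prod: "sverts (sg_prod G H) = sverts G \<times> sverts H"
  by (simp add: sg_prod_def sverts_def)

lemma sedges_sg_prod:
  "sedges (sg_prod G H) =
     {e. \<exists>u v1 v2. u \<in> sverts G \<and> {v1, v2} \<in> sedges H \<and> e = {(u, v1), (u, v2)}} \<union>
     {e. \<exists>v u1 u2. v \<in> sverts H \<and> {u1, u2} \<in> sedges G \<and> e = {(u1, v), (u2, v)}}"
  by (simp add: sg_prod_def sedges_def)

lemma sedges_sg_prodE:
  assumes "e \<in> sedges (sg_prod G H)"
  obtains u v1 v2 where "u \<in> sverts G" "{v1, v2} \<in> sedges H" "e = {(u, v1), (u, v2)}"
    | v u1 u2 where "v \<in> sverts H" "{u1, u2} \<in> sedges G" "e = {(u1, v), (u2, v)}"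
  using assms unfolding sedges_sg_prod by blast

lemma sg_prod_fst_edge:
  "u \<in> sverts G \<Longrightarrow> {v1, v2} \<in> sedges H \<Longrightarrow> {(u, v1), (u, v2)} \<in> sedges (sg_prod G H)"
  unfolding sedges_sg_prod by blast

lemma sg_prod_snd_edge:
  "v \<in> sverts H \<Longrightarrow> {u1, u2} \<in> sedges G \<Longrightarrow> {(u1, v), (u2, v)} \<in> sedges (sg_prod G H)"
  unfolding sedges_sg_prod by blast

lemma ssig_sg_prod_fst_edge: "ssig (sg_prod G H) {(u, v1), (u, v2)} = ssig H {v1, v2}"
  by (simp add: sg_prod_def ssig_def)

lemma ssig_sg_prod_snd_edge:
  "u1 \<noteq> u2 \<Longrightarrow> ssig (sg_prod G H) {(u1, v), (u2, v)} = ssig G {u1, u2}"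
  by (simp add: sg_prod_def ssig_def)

lemma signed_graph_sg_prod:
  assumes G: "signed_graph G" and H: "signed_graph H"
  shows "signed_graph (sg_prod G H)"
proof -
  have "(\<exists>p q. p \<in> sverts (sg_prod G H) \<and> q \<in> sverts (sg_prod G H) \<and> p \<noteq> q \<and> e = {p, q}) \<and>
      ssig (sg_prod G H) e \<in> {1, -1}"
    if "e \<in> sedges (sg_prod G H)" for e
    using that
  proof (cases rule: sedges_sg_prodE)
    case (1 u v1 v2)
    moreover have "ssig H {v1, v2} \<in> {1, -1}"
      using H 1(2) unfolding signed_graph_def by blast
    ultimately show ?thesis
      using signed_graph_edgeD[OF H 1(2)]
      by (auto simp: sverts_sg_prod ssig_sg_prod_fst_edge)
  next
    case (2 v u1 u2)
    moreover have "ssig G {u1, u2} \<in> {1, -1}"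
      using G 2(2) unfolding signed_graph_def by blast
    ultimately show ?thesis
      using signed_graph_edgeD[OF G 2(2)]
      by (auto simp: sverts_sg_prod ssig_sg_prod_snd_edge)
  qed
  then show ?thesis
    unfolding signed_graph_def by blast
qed

lemma sg_hom_after_switch_map_prod:
  assumes G: "signed_graph G" and G': "signed_graph G'" and H: "signed_graph H"
    and f: "sg_hom_after_switch f X G G'" and g: "sg_hom_after_switch g Y H H'"
  defines "Z \<equiv> {(u, v). u \<in> sverts G \<and> v \<in> sverts H \<and> (u \<in> X) \<noteq> (v \<in> Y)}"
  shows "sg_hom_after_switch (map_prod f g) Z (sg_prod G H) (sg_prod G' H')"
proof -
  note fV = f[unfolded sg_hom_after_switch_def, THEN conjunct1]
   and fE = f[unfolded sg_hom_after_switch_def, THEN conjunct2, rule_format]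
  note gV = g[unfolded sg_hom_after_switch_def, THEN conjunct1]
   and gE = g[unfolded sg_hom_after_switch_def, THEN conjunct2, rule_format]
  have edge: "map_prod f g ` e \<in> sedges (sg_prod G' H') \<and>
      ssig (sg_prod G' H') (map_prod f g ` e) = switch Z (ssig (sg_prod G H)) e"
    if "e \<in> sedges (sg_prod G H)" for e
    using that
  proof (cases rule: sedges_sg_prodE)
    case (1 u v1 v2)
    then have "v1 \<noteq> v2" "v1 \<in> sverts H" "v2 \<in> sverts H"
      using signed_graph_edgeD[OF H] by blast+
    moreover have "{g v1, g v2} \<in> sedges H'" "ssig H' {g v1, g v2} = switch Y (ssig H) {v1, v2}"
      using gE[OF 1(2)] by simp_all
    moreover have "{(f u, g v1), (f u, g v2)} \<in> sedges (sg_prod G' H')"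
      using 1 fV \<open>{g v1, g v2} \<in> sedges H'\<close> by (blast intro: sg_prod_fst_edge)
    moreover have "((u, v1) \<in> Z) = ((u, v2) \<in> Z) \<longleftrightarrow> (v1 \<in> Y) = (v2 \<in> Y)"
      using 1 \<open>v1 \<in> sverts H\<close> \<open>v2 \<in> sverts H\<close> by (auto simp: Z_def)
    ultimately show ?thesis
      using 1 by (simp add: switch_doubleton ssig_sg_prod_fst_edge)
  next
    case (2 v u1 u2)
    then have "u1 \<noteq> u2" "u1 \<in> sverts G" "u2 \<in> sverts G"
      using signed_graph_edgeD[OF G] by blast+
    moreover have "{f u1, f u2} \<in> sedges G'" "ssig G' {f u1, f u2} = switch X (ssig G) {u1, u2}"
      using fE[OF 2(2)] by simp_all
    moreover have "f u1 \<noteq> f u2"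
      using signed_graph_edgeD(1)[OF G' \<open>{f u1, f u2} \<in> sedges G'\<close>] .
    moreover have "{(f u1, g v), (f u2, g v)} \<in> sedges (sg_prod G' H')"
      using 2 gV \<open>{f u1, f u2} \<in> sedges G'\<close> by (blast intro: sg_prod_snd_edge)
    moreover have "((u1, v) \<in> Z) = ((u2, v) \<in> Z) \<longleftrightarrow> (u1 \<in> X) = (u2 \<in> X)"
      using 2 \<open>u1 \<in> sverts G\<close> \<open>u2 \<in> sverts G\<close> by (auto simp: Z_def)
    ultimately show ?thesis
      using 2 by (simp add: switch_doubleton ssig_sg_prod_snd_edge)
  qed
  have "map_prod f g ` sverts (sg_prod G H) \<subseteq> sverts (sg_prod G' H')"
    using fV gV by (auto simp: sverts_sg_prod)
  with edge show ?thesis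
    unfolding sg_hom_after_switch_def by blast
qed

lemma is_sg_hom_map_prod:
  assumes "signed_graph G" "signed_graph G'" "signed_graph H"
    and "is_sg_hom f G G'" "is_sg_hom g H H'"
  shows "is_sg_hom (map_prod f g) (sg_prod G H) (sg_prod G' H')"
proof -
  obtain X Y where XY: "sg_hom_after_switch f X G G'" "sg_hom_after_switch g Y H H'"
    using assms(4,5) unfolding is_sg_hom_iff_switch[OF assms(1)] is_sg_hom_iff_switch[OF assms(3)]
    by blast
  define Z where "Z = {(u, v). u \<in> sverts G \<and> v \<in> sverts H \<and> (u \<in> X) \<noteq> (v \<in> Y)}"
  have "sg_hom_after_switch (map_prod f g) Z (sg_prod G H) (sg_prod G' H')"
    unfolding Z_def using assms(1-3) XY by (rule sg_hom_after_switch_map_prod)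
  moreover have "Z \<subseteq> sverts (sg_prod G H)"
    by (auto simp: Z_def sverts_sg_prod)
  ultimately show ?thesis
    unfolding is_sg_hom_iff_switch[OF signed_graph_sg_prod[OF assms(1,3)]] by blast
qed

theorem theorem4p2:
  fixes G :: "'a sgraph" and G' :: "'b sgraph" and H :: "'c sgraph" and H' :: "'d sgraph"
  assumes "signed_graph G" and "signed_graph G'" and "signed_graph H" and "signed_graph H'"
    and "sg_hom_exists G G'" and "sg_hom_exists H H'"
  shows "sg_hom_exists (sg_prod G H) (sg_prod G' H')"
  using assms is_sg_hom_map_prod unfolding sg_hom_exists_def by metis

end
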